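(* The Collatz conjecture (for every $n\in\mathbb{N}$ there exists $k\in\mathbb{N}_0$ with $T^{(k)}(n)=1$) holds if and only if every natural number $n\notin\{1,2,4\}$ can be represented in the form $n=\frac{2^m}{3^l}-\sum_{k=1}^{l}\frac{2^{b_k}}{3^k}$ for some $m,l,b_1,\dots,b_l\in\mathbb{N}_0$ with $0\leq l\leq m-3$ and $0\leq b_1<b_2<\cdots<b_l\leq m-4$.
   Context: $\mathbb{N}=\{1,2,3,\dots\}$, $\mathbb{N}_0=\mathbb{N}\cup\{0\}$. The Collatz map $T:\mathbb{N}\to\mathbb{N}$ is $T(n)=\frac{3n+1}{2}$ if $n$ is odd and $T(n)=\frac{n}{2}$ if $n$ is even; $T^{(k)}$ denotes the $k$-fold composition ($T^{(0)}$ the identity). For $l=0$ the sum is empty. *)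

theory Defs
  imports Complex_Main
begin

text \<open>The Collatz map T on the naturals (value at 0 is irrelevant; only n \<ge> 1 is used).\<close>
definition collatzT :: "nat \<Rightarrow> nat" where
  "collatzT n = (if odd n then (3 * n + 1) div 2 else n div 2)"

end

theory Submission
  imports Defs
begin

text \<open>If the odd steps among the first \<open>m\<close> iterations of \<open>T\<close> starting at \<open>n\<close> happen at
  times \<open>c 0 < \<dots> < c (l - 1)\<close>, then unrolling \<open>2 T(x) = 3x + 1\<close> and \<open>2 T(x) = x\<close> gives
  \<open>2^m T^m(n) = 3^l n + \<Sum>k<l. 3^(l-1-k) 2^(c k)\<close>. Conversely, such an identity with
  right-hand side \<open>2^m\<close> forces \<open>T^m(n) = 1\<close>, because parity determines every step.
  Dividing by \<open>3^l\<close> and trajectories through 8 (the only way into the cycle from outside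
  \<open>{1, 2, 4}\<close>, costing three more halvings) turn this into the representation of the
  theorem, with \<open>b (k + 1) = c k\<close>.\<close>

definition collatz_offset :: "nat \<Rightarrow> (nat \<Rightarrow> nat) \<Rightarrow> nat" where
  "collatz_offset l c = (\<Sum>k<l. 3 ^ (l - 1 - k) * 2 ^ c k)"

definition increasing_below :: "nat \<Rightarrow> nat \<Rightarrow> (nat \<Rightarrow> nat) \<Rightarrow> bool" where
  "increasing_below m l c \<longleftrightarrow> (\<forall>k. Suc k < l \<longrightarrow> c k < c (Suc k)) \<and> (\<forall>k<l. c k < m)"

lemma collatzT_even: "even n \<Longrightarrow> 2 * collatzT n = n"
  unfolding collatzT_def by simp

lemma collatzT_odd: "odd n \<Longrightarrow> 2 * collatzT n = 3 * n + 1"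
  unfolding collatzT_def by presburger

lemma collatzT_eq_one_iff: "collatzT n = 1 \<longleftrightarrow> n = 2"
  unfolding collatzT_def by presburger

lemma collatzT_eq_two_iff: "collatzT n = 2 \<longleftrightarrow> n = 1 \<or> n = 4"
  unfolding collatzT_def by presburger

lemma collatzT_eq_four_iff: "collatzT n = 4 \<longleftrightarrow> n = 8"
  unfolding collatzT_def by presburger

lemma collatz_offset_cong:
  "(\<And>k. k < l \<Longrightarrow> c k = d k) \<Longrightarrow> collatz_offset l c = collatz_offset l d"
  unfolding collatz_offset_def by simp

lemma collatz_offset_Suc_times: "collatz_offset l (\<lambda>k. Suc (c k)) = 2 * collatz_offset l c"
  unfolding collatz_offset_def by (simp add: sum_distrib_left mult_ac)

lemma collatz_offset_Suc:
  "collatz_offset (Suc l) c = 3 ^ l * 2 ^ c 0 + collatz_offset l (\<lambda>k. c (Suc k))"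
  unfolding collatz_offset_def by (simp only: sum.lessThan_Suc_shift) simp

lemma collatz_offset_cons_zero:
  "collatz_offset (Suc l) (case_nat 0 (\<lambda>k. Suc (c k))) = 3 ^ l + 2 * collatz_offset l c"
  by (simp add: collatz_offset_Suc collatz_offset_Suc_times)

lemma of_nat_collatz_offset:
  "real (collatz_offset l (\<lambda>k. b (Suc k))) = 3 ^ l * (\<Sum>k=1..l. 2 ^ b k / 3 ^ k)"
proof -
  have "real (collatz_offset l (\<lambda>k. b (Suc k))) = (\<Sum>k<l. 3 ^ l * (2 ^ b (Suc k) / 3 ^ Suc k))"
    unfolding collatz_offset_def of_nat_sum
  proof (rule sum.cong)
    fix k assume "k \<in> {..<l}"
    then have "Suc k + (l - 1 - k) = l" by simp
    then have "(3::real) ^ l = 3 ^ Suc k * 3 ^ (l - 1 - k)"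
      by (metis power_add)
    then show "real (3 ^ (l - 1 - k) * 2 ^ b (Suc k)) = 3 ^ l * (2 ^ b (Suc k) / 3 ^ Suc k)"
      by simp
  qed simp
  also have "\<dots> = 3 ^ l * (\<Sum>k=1..l. 2 ^ b k / 3 ^ k)"
    by (simp add: sum.atLeast1_atMost_eq sum_distrib_left)
  finally show ?thesis .
qed

lemma representation_iff_offset:
  "real n = 2 ^ m / 3 ^ l - (\<Sum>k=1..l. 2 ^ b k / 3 ^ k) \<longleftrightarrow>
     3 ^ l * n + collatz_offset l (\<lambda>k. b (Suc k)) = 2 ^ m"
proof -
  have "real n = 2 ^ m / 3 ^ l - (\<Sum>k=1..l. 2 ^ b k / 3 ^ k) \<longleftrightarrow>
        3 ^ l * real n + 3 ^ l * (\<Sum>k=1..l. 2 ^ b k / 3 ^ k) = 2 ^ m"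
    by (auto simp: field_simps)
  also have "\<dots> \<longleftrightarrow> real (3 ^ l * n + collatz_offset l (\<lambda>k. b (Suc k))) = real (2 ^ m)"
    by (simp only: of_nat_add of_nat_mult of_nat_power of_nat_collatz_offset) simp
  finally show ?thesis by (simp only: of_nat_eq_iff)
qed

lemma increasing_below_Suc:
  "increasing_below m l c \<Longrightarrow> increasing_below (Suc m) l (\<lambda>k. Suc (c k))"
  unfolding increasing_below_def by simp

lemma increasing_below_cons_zero:
  assumes "increasing_below m l c"
  shows "increasing_below (Suc m) (Suc l) (case_nat 0 (\<lambda>k. Suc (c k)))"
  using assms unfolding increasing_below_def by (auto split: nat.split)

lemma increasing_below_tail:
  "increasing_below m (Suc l) c \<Longrightarrow> increasing_below m l (\<lambda>k. c (Suc k))"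
  unfolding increasing_below_def by simp

lemma increasing_below_pred:
  assumes inc: "increasing_below (Suc m) l c" and start: "l = 0 \<or> 0 < c 0"
  shows "increasing_below m l (\<lambda>k. c k - 1)" and "\<And>k. k < l \<Longrightarrow> c k = Suc (c k - 1)"
proof -
  have pos: "0 < c k" if "k < l" for k
    using that
  proof (induction k)
    case (Suc k)
    then show ?case using inc unfolding increasing_below_def by fastforce
  qed (use start in auto)
  then show "\<And>k. k < l \<Longrightarrow> c k = Suc (c k - 1)" by simp
  show "increasing_below m l (\<lambda>k. c k - 1)"
    unfolding increasing_below_def
  proof (intro conjI allI impI)
    fix k assume "Suc k < l"
    then show "c k - 1 < c (Suc k) - 1"
      using inc pos[of k] unfolding increasing_below_def by force
  next
    fix k assume "k < l"
    then show "c k - 1 < m"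
      using inc pos[of k] unfolding increasing_below_def by force
  qed
qed

lemma increasing_below_shift_iff:
  "increasing_below m l (\<lambda>k. b (Suc k)) \<longleftrightarrow>
     (\<forall>k\<in>{1..<l}. b k < b (Suc k)) \<and> (\<forall>k\<in>{1..l}. b k < m)"
proof -
  have "{1..<l} = Suc ` {k. Suc k < l}"
    by (auto simp: image_iff) (metis Suc_le_D)
  then show ?thesis
    unfolding increasing_below_def image_Suc_lessThan[symmetric] by auto
qed

lemma funpow_Suc_apply: "(f ^^ Suc m) x = (f ^^ m) (f x)"
  by (simp only: funpow_Suc_right comp_apply)

lemma collatz_iterate_offset:
  "\<exists>l c. l \<le> j \<and> increasing_below j l c \<and>
     3 ^ l * n + collatz_offset l c = 2 ^ j * (collatzT ^^ j) n"
proof (induction j arbitrary: n)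
  case 0
  show ?case by (rule exI[of _ 0]) (simp add: collatz_offset_def increasing_below_def)
next
  case (Suc j)
  obtain l c where "l \<le> j" and inc: "increasing_below j l c"
    and eq: "3 ^ l * collatzT n + collatz_offset l c = 2 ^ j * (collatzT ^^ j) (collatzT n)"
    using Suc.IH[of "collatzT n"] by blast
  have rhs: "2 ^ Suc j * (collatzT ^^ Suc j) n = 2 * (3 ^ l * collatzT n + collatz_offset l c)"
    by (simp only: eq funpow_Suc_apply) simp
  show ?case
  proof (cases "even n")
    case True
    have "3 ^ l * n + collatz_offset l (\<lambda>k. Suc (c k)) =
        3 ^ l * (2 * collatzT n) + 2 * collatz_offset l c"
      by (simp only: collatzT_even[OF True] collatz_offset_Suc_times)
    also have "\<dots> = 2 ^ Suc j * (collatzT ^^ Suc j) n"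
      unfolding rhs by (simp add: algebra_simps)
    finally show ?thesis using \<open>l \<le> j\<close> increasing_below_Suc[OF inc]
      by (intro exI[of _ l] exI[of _ "\<lambda>k. Suc (c k)"]) simp
  next
    case False
    have "3 ^ Suc l * n + collatz_offset (Suc l) (case_nat 0 (\<lambda>k. Suc (c k))) =
        3 ^ l * (3 * n + 1) + 2 * collatz_offset l c"
      by (simp add: collatz_offset_cons_zero algebra_simps)
    also have "\<dots> = 2 ^ Suc j * (collatzT ^^ Suc j) n"
      unfolding rhs collatzT_odd[OF False, symmetric] by (simp add: algebra_simps)
    finally show ?thesis using \<open>l \<le> j\<close> increasing_below_cons_zero[OF inc]
      by (intro exI[of _ "Suc l"] exI[of _ "case_nat 0 (\<lambda>k. Suc (c k))"]) simp
  qed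
qed

lemma collatz_iterate_from_offset:
  "increasing_below m l c \<Longrightarrow> 3 ^ l * n + collatz_offset l c = 2 ^ m * r \<Longrightarrow>
     (collatzT ^^ m) n = r"
proof (induction m arbitrary: l c n)
  case 0
  then have "l = 0" unfolding increasing_below_def by blast
  with 0 show ?case by (simp add: collatz_offset_def)
next
  case (Suc m)
  consider (halving) "l = 0 \<or> 0 < c 0" | (odd_step) l' where "l = Suc l'" "c 0 = 0"
    by (cases l) auto
  then show ?case
  proof cases
    case halving
    let ?d = "\<lambda>k. c k - 1"
    have inc: "increasing_below m l ?d" and c_eq: "\<And>k. k < l \<Longrightarrow> c k = Suc (?d k)"
      using increasing_below_pred[OF Suc.prems(1) halving] by blast+
    have "collatz_offset l c = 2 * collatz_offset l ?d"
      using collatz_offset_cong[OF c_eq] by (simp add: collatz_offset_Suc_times)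
    with Suc.prems(2) have eq: "3 ^ l * n + 2 * collatz_offset l ?d = 2 * (2 ^ m * r)"
      by simp
    then have "even (3 ^ l * n + 2 * collatz_offset l ?d)" by (metis dvd_triv_left)
    then have "even n" by simp
    then have "3 ^ l * n = 2 * (3 ^ l * collatzT n)"
      by (metis collatzT_even mult.left_commute)
    with eq have "3 ^ l * collatzT n + collatz_offset l ?d = 2 ^ m * r"
      by linarith
    with Suc.IH[OF inc] show ?thesis by (simp only: funpow_Suc_apply)
  next
    case odd_step
    let ?d = "\<lambda>k. c (Suc k) - 1"
    have tail: "increasing_below (Suc m) l' (\<lambda>k. c (Suc k))"
      using Suc.prems(1) increasing_below_tail[of "Suc m" l' c] odd_step by simp
    have "l' = 0 \<or> 0 < c (Suc 0)"
      using Suc.prems(1) odd_step unfolding increasing_below_def by auto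
    then have inc: "increasing_below m l' ?d"
      and c_eq: "\<And>k. k < l' \<Longrightarrow> c (Suc k) = Suc (?d k)"
      using increasing_below_pred[OF tail] by blast+
    have "collatz_offset l c = 3 ^ l' + 2 * collatz_offset l' ?d"
      using collatz_offset_cong[OF c_eq] odd_step
      by (simp add: collatz_offset_Suc collatz_offset_Suc_times)
    with Suc.prems(2) odd_step
    have eq: "3 ^ l' * (3 * n + 1) + 2 * collatz_offset l' ?d = 2 * (2 ^ m * r)"
      by (simp add: algebra_simps)
    then have "even (3 ^ l' * (3 * n + 1) + 2 * collatz_offset l' ?d)" by (metis dvd_triv_left)
    then have "odd n" by simp
    then have "3 ^ l' * (3 * n + 1) = 2 * (3 ^ l' * collatzT n)"
      by (metis collatzT_odd mult.left_commute)
    with eq have "3 ^ l' * collatzT n + collatz_offset l' ?d = 2 ^ m * r"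
      by linarith
    with Suc.IH[OF inc] show ?thesis by (simp only: funpow_Suc_apply)
  qed
qed

lemma collatz_reaches_eight:
  assumes "(collatzT ^^ k) n = 1" and "n \<notin> {1, 2, 4}"
  shows "\<exists>j. (collatzT ^^ j) n = 8"
  using assms
proof (induction k arbitrary: n)
  case (Suc k)
  show ?case
  proof (cases "collatzT n \<in> {1, 2, 4}")
    case True
    with Suc.prems(2) have "n = 8"
      unfolding insert_iff collatzT_eq_one_iff collatzT_eq_two_iff collatzT_eq_four_iff by auto
    then show ?thesis by (metis funpow_0)
  next
    case False
    with Suc.IH Suc.prems(1) obtain j where "(collatzT ^^ j) (collatzT n) = 8"
      by (auto simp only: funpow_Suc_apply)
    then show ?thesis by (metis funpow_Suc_apply)
  qed
qed simp

lemma representation_if_reaches_eight: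
  assumes "(collatzT ^^ j) n = 8"
  shows "\<exists>m l b. l + 3 \<le> m \<and> (\<forall>k\<in>{1..<l}. b k < b (Suc k)) \<and>
    (\<forall>k\<in>{1..l}. b k + 4 \<le> m) \<and> real n = 2 ^ m / 3 ^ l - (\<Sum>k=1..l. 2 ^ b k / 3 ^ k)"
proof -
  obtain l c where "l \<le> j" and inc: "increasing_below j l c"
    and eq: "3 ^ l * n + collatz_offset l c = 2 ^ j * 8"
    using collatz_iterate_offset[of j n] assms by auto
  let ?b = "\<lambda>k. c (k - 1)"
  have "3 ^ l * n + collatz_offset l (\<lambda>k. ?b (Suc k)) = 2 ^ (j + 3)"
    using eq by (simp add: power_add)
  then have "real n = 2 ^ (j + 3) / 3 ^ l - (\<Sum>k=1..l. 2 ^ ?b k / 3 ^ k)"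
    unfolding representation_iff_offset .
  moreover have "(\<forall>k\<in>{1..<l}. ?b k < ?b (Suc k)) \<and> (\<forall>k\<in>{1..l}. ?b k < j)"
    using inc increasing_below_shift_iff[of j l ?b] by simp
  ultimately show ?thesis using \<open>l \<le> j\<close>
    by (intro exI[of _ "j + 3"] exI[of _ l] exI[of _ ?b]) auto
qed

lemma reaches_one_if_representation:
  assumes "\<forall>k\<in>{1..<l}. b k < b (Suc k)" and "\<forall>k\<in>{1..l}. b k + 4 \<le> m"
    and "real n = 2 ^ m / 3 ^ l - (\<Sum>k=1..l. 2 ^ b k / 3 ^ k)"
  shows "(collatzT ^^ m) n = 1"
proof (rule collatz_iterate_from_offset)
  show "increasing_below m l (\<lambda>k. b (Suc k))"
    using assms(1,2) by (auto simp: increasing_below_shift_iff)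
  show "3 ^ l * n + collatz_offset l (\<lambda>k. b (Suc k)) = 2 ^ m * 1"
    using assms(3) unfolding representation_iff_offset by simp
qed

theorem mainTheorem4:
  shows "(\<forall>n::nat. n \<ge> 1 \<longrightarrow> (\<exists>k::nat. (collatzT ^^ k) n = 1)) \<longleftrightarrow>
    (\<forall>n::nat. n \<ge> 1 \<and> n \<notin> {1, 2, 4} \<longrightarrow>
      (\<exists>(m::nat) (l::nat) (b::nat \<Rightarrow> nat).
         l + 3 \<le> m \<and>
         (\<forall>k\<in>{1..<l}. b k < b (Suc k)) \<and>
         (\<forall>k\<in>{1..l}. b k + 4 \<le> m) \<and>
         real n = 2 ^ m / 3 ^ l - (\<Sum>k=1..l. 2 ^ (b k) / 3 ^ k)))"
    (is "?conjecture \<longleftrightarrow> (\<forall>n. _ \<longrightarrow> ?representable n)")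
proof
  assume ?conjecture
  show "\<forall>n. n \<ge> 1 \<and> n \<notin> {1, 2, 4} \<longrightarrow> ?representable n"
  proof (intro allI impI)
    fix n :: nat assume n: "n \<ge> 1 \<and> n \<notin> {1, 2, 4}"
    with \<open>?conjecture\<close> obtain k where "(collatzT ^^ k) n = 1" by blast
    with n obtain j where "(collatzT ^^ j) n = 8" using collatz_reaches_eight by blast
    then show "?representable n" by (rule representation_if_reaches_eight)
  qed
next
  assume representable: "\<forall>n. n \<ge> 1 \<and> n \<notin> {1, 2, 4} \<longrightarrow> ?representable n"
  show ?conjecture
  proof (intro allI impI)
    fix n :: nat assume "n \<ge> 1"
    show "\<exists>k. (collatzT ^^ k) n = 1"
    proof (cases "n \<in> {1, 2, 4}")
      case True
      have "collatzT 2 = 1" and "collatzT 4 = 2" by (simp_all add: collatzT_def)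
      then have "(collatzT ^^ 0) 1 = 1" "(collatzT ^^ Suc 0) 2 = 1"
        "(collatzT ^^ Suc (Suc 0)) 4 = 1"
        by simp_all
      with True show ?thesis by blast
    next
      case False
      with representable \<open>n \<ge> 1\<close> show ?thesis
        using reaches_one_if_representation by blast
    qed
  qed
qed

end
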